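(* Let $n=4h$ with $h$ odd, let $D_n=\langle x,y\mid x^n=y^2=1,\ yxy^{-1}=x^{-1}\rangle$, and let $G=D_n\rtimes\langle\beta_2\rangle$ with $\langle \beta_2\rangle\cong\mathbb Z/2$, where conjugation by $\beta_2$ acts by $y\mapsto yx^2$, $x\mapsto x^{2h-1}$; let $H=D_n\times\{0\}$ (index 2 in $G$). Then for none of the cover types I, II, III-a, III-b does there exist an admissible homomorphism $f:T(m_1,\dots,m_r)\to G$.
   Context: For integers $m_1,\dots,m_r\ge 2$, $T(m_1,\dots,m_r):=\langle\gamma_1,\dots,\gamma_r\mid \gamma_1\cdots\gamma_r=1,\ \gamma_i^{m_i}=1\rangle$. Let $f_H:=\pi_H\circ f$, where $\pi_H:G\to G/H\cong\mathbb Z/2$ is the quotient map. A homomorphism $f:T(m_1,\dots,m_r)\to G$ is admissible for a given cover type if $f$ is surjective, $f(\gamma_i)$ has order exactly $m_i$, and: Cover type I: $r=6$, $(m_i)=(2,\dots,2)$, $f_H(\gamma_i)\ne 0$ for all $i$. Cover type II: $r=5$, $(m_i)=(2,2,2,2,c_5)$, $f_H(\gamma_i)\ne0$ for $i\le4$, $f_H(\gamma_5)=0$. Cover type III-a: $r=4$, $(m_i)=(2,2,2,2d_4)$ with $d_4>1$, $f_H(\gamma_i)\ne 0$ for all $i$. Cover type III-b: $r=4$, $(m_i)=(2,2,c_3,c_4)$ with $c_3\le c_4$, $c_4>2$, $f_H(\gamma_1),f_H(\gamma_2)\ne0$, $f_H(\gamma_3)=f_H(\gamma_4)=0$. *)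

theory Defs
  imports "HOL-Algebra.Algebra"
begin

text \<open>Element ((a,s),e) represents x^a y^s beta^e, with 0 <= a < n, s,e in {0,1}.\<close>

definition dmult :: "int \<Rightarrow> int \<times> int \<Rightarrow> int \<times> int \<Rightarrow> int \<times> int" where
  "dmult n d d' = (case d of (a, s) \<Rightarrow> case d' of (b, t) \<Rightarrow>
      ((a + (if s = 0 then b else - b)) mod n, (s + t) mod 2))"

text \<open>Conjugation by beta_2: x maps to x^(2h-1), y maps to y x^2 = x^(-2) y,
  hence x^a y^s maps to x^((2h-1)a - 2s) y^s.\<close>
definition phiD :: "int \<Rightarrow> int \<times> int \<Rightarrow> int \<times> int" where
  "phiD h d = (case d of (a, s) \<Rightarrow> (((2*h - 1) * a - 2 * s) mod (4*h), s))"

definition Gmult :: "int \<Rightarrow> (int \<times> int) \<times> int \<Rightarrow> (int \<times> int) \<times> int \<Rightarrow> (int \<times> int) \<times> int" where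
  "Gmult h g g' = (case g of (d, e) \<Rightarrow> case g' of (d', e') \<Rightarrow>
      (dmult (4*h) d (if e = 0 then d' else phiD h d'), (e + e') mod 2))"

definition Ggrp :: "int \<Rightarrow> ((int \<times> int) \<times> int) monoid" where
  "Ggrp h = \<lparr> carrier = {g. 0 \<le> fst (fst g) \<and> fst (fst g) < 4*h \<and>
                 snd (fst g) \<in> {0,1} \<and> snd g \<in> {0,1}},
              monoid.mult = Gmult h, one = ((0, 0), 0) \<rparr>"

definition Hsub :: "int \<Rightarrow> ((int \<times> int) \<times> int) set" where
  "Hsub h = {g \<in> carrier (Ggrp h). snd g = 0}"

text \<open>By the presentation of T(m_1,...,m_r), a homomorphism f : T -> G is the same as the
  tuple gs = (f(gamma_1),...,f(gamma_r)) of elements satisfying the relations.\<close>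
definition T_hom :: "('a, 'b) monoid_scheme \<Rightarrow> nat list \<Rightarrow> 'a list \<Rightarrow> bool" where
  "T_hom G ms gs \<longleftrightarrow> length gs = length ms \<and> (\<forall>m \<in> set ms. m \<ge> 2) \<and>
     set gs \<subseteq> carrier G \<and> foldr (\<otimes>\<^bsub>G\<^esub>) gs \<one>\<^bsub>G\<^esub> = \<one>\<^bsub>G\<^esub> \<and>
     (\<forall>i < length ms. (gs ! i) [^]\<^bsub>G\<^esub> (ms ! i) = \<one>\<^bsub>G\<^esub>)"

definition admissible_hom :: "('a, 'b) monoid_scheme \<Rightarrow> nat list \<Rightarrow> 'a list \<Rightarrow> bool" where
  "admissible_hom G ms gs \<longleftrightarrow> T_hom G ms gs \<and> generate G (set gs) = carrier G \<and>
     (\<forall>i < length ms. group.ord G (gs ! i) = ms ! i)"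

text \<open>f_H(gamma_i) \<noteq> 0 iff f(gamma_i) \<notin> H.\<close>
definition cover_I :: "('a, 'b) monoid_scheme \<Rightarrow> 'a set \<Rightarrow> 'a list \<Rightarrow> bool" where
  "cover_I G H gs \<longleftrightarrow> admissible_hom G (replicate 6 2) gs \<and> (\<forall>i < 6. gs ! i \<notin> H)"

definition cover_II :: "('a, 'b) monoid_scheme \<Rightarrow> 'a set \<Rightarrow> 'a list \<Rightarrow> bool" where
  "cover_II G H gs \<longleftrightarrow> (\<exists>c5. admissible_hom G [2,2,2,2,c5] gs \<and>
     (\<forall>i < 4. gs ! i \<notin> H) \<and> gs ! 4 \<in> H)"

definition cover_IIIa :: "('a, 'b) monoid_scheme \<Rightarrow> 'a set \<Rightarrow> 'a list \<Rightarrow> bool" where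
  "cover_IIIa G H gs \<longleftrightarrow> (\<exists>d4 > 1. admissible_hom G [2,2,2,2*d4] gs \<and>
     (\<forall>i < 4. gs ! i \<notin> H))"

definition cover_IIIb :: "('a, 'b) monoid_scheme \<Rightarrow> 'a set \<Rightarrow> 'a list \<Rightarrow> bool" where
  "cover_IIIb G H gs \<longleftrightarrow> (\<exists>c3 c4. c3 \<le> c4 \<and> c4 > 2 \<and> admissible_hom G [2,2,c3,c4] gs \<and>
     gs ! 0 \<notin> H \<and> gs ! 1 \<notin> H \<and> gs ! 2 \<in> H \<and> gs ! 3 \<in> H)"

end

theory Submission
  imports Defs
begin

text \<open>For all u, v the map x^a y^s \<beta>_2^e \<mapsto> u a + v s mod 2 is a homomorphism G \<rightarrow> Z/2,
  nontrivial unless u and v are both even. An involution of G outside H has the form x^a \<beta>_2 with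
  a even, so it lies in the kernel of every such character. In each cover type, all f(\<gamma>_i) but
  one lie in the kernel of a single nontrivial character: all but one are involutions outside H,
  and in type III-b the character is chosen to contain f(\<gamma>_3). Since f(\<gamma>_1) \<cdots> f(\<gamma>_r) = 1, an
  even number of the f(\<gamma>_i) lie outside that kernel, so the remaining one lies inside it too, and
  the f(\<gamma>_i) cannot generate G.\<close>

lemma mod_mult_right_add_eq: "((c::int) * (u mod n) + d) mod n = (c*u + d) mod n"
  by (metis mod_add_left_eq mod_mult_right_eq)

lemma mod_mult_right_diff_eq: "((c::int) * (u mod n) - d) mod n = (c*u - d) mod n"
  by (metis mod_diff_left_eq mod_mult_right_eq)

lemma dmult_assoc:
  "snd d1 \<in> {0,1} \<Longrightarrow> snd d2 \<in> {0,1} \<Longrightarrow>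
   dmult n (dmult n d1 d2) d3 = dmult n d1 (dmult n d2 d3)"
  by (cases d1; cases d2; cases d3) (auto simp: dmult_def mod_simps algebra_simps)

lemma phiD_dmult:
  "snd d1 \<in> {0,1} \<Longrightarrow> snd d2 \<in> {0,1} \<Longrightarrow>
   phiD h (dmult (4*h) d1 d2) = dmult (4*h) (phiD h d1) (phiD h d2)"
  by (cases d1; cases d2)
    (auto simp: dmult_def phiD_def mod_simps mod_mult_right_add_eq mod_mult_right_diff_eq;
     simp add: algebra_simps)

lemma phiD_phiD:
  assumes "0 \<le> a" "a < 4*h"
  shows "phiD h (phiD h (a, s)) = (a, s)"
proof -
  have "(2*h-1)*((2*h-1)*a-2*s) - 2*s = a + ((h-1)*a - s) * (4*h)"
    by (simp add: algebra_simps)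
  thus ?thesis using assms by (simp add: phiD_def mod_mult_right_diff_eq)
qed

lemma snd_phiD [simp]: "snd (phiD h d) = snd d"
  by (simp add: phiD_def split: prod.splits)

lemma snd_dmult: "snd (dmult n d1 d2) \<in> {0,1}"
  by (auto simp: dmult_def split: prod.splits)

lemma Ggrp_mult: "x \<otimes>\<^bsub>Ggrp h\<^esub> y = Gmult h x y"
  by (simp add: Ggrp_def)

lemma Ggrp_one: "\<one>\<^bsub>Ggrp h\<^esub> = ((0, 0), 0)"
  by (simp add: Ggrp_def)

lemma Gmult_Pair:
  "Gmult h (d1, e1) (d2, e2) = (dmult (4*h) d1 (if e1 = 0 then d2 else phiD h d2), (e1 + e2) mod 2)"
  by (simp add: Gmult_def)

lemma mem_Ggrp_iff:
  "((a, s), e) \<in> carrier (Ggrp h) \<longleftrightarrow> 0 \<le> a \<and> a < 4*h \<and> s \<in> {0,1} \<and> e \<in> {0,1}"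
  by (simp add: Ggrp_def)

lemma group_Ggrp:
  assumes "h > 0"
  shows "group (Ggrp h)"
proof (rule groupI)
  fix x y
  assume "x \<in> carrier (Ggrp h)" "y \<in> carrier (Ggrp h)"
  then show "x \<otimes>\<^bsub>Ggrp h\<^esub> y \<in> carrier (Ggrp h)"
    using assms by (auto simp: Ggrp_def Gmult_def dmult_def phiD_def split: prod.splits)
next
  show "\<one>\<^bsub>Ggrp h\<^esub> \<in> carrier (Ggrp h)"
    using assms by (simp add: Ggrp_def)
next
  fix x y z
  assume "x \<in> carrier (Ggrp h)" "y \<in> carrier (Ggrp h)" "z \<in> carrier (Ggrp h)"
  then show "x \<otimes>\<^bsub>Ggrp h\<^esub> y \<otimes>\<^bsub>Ggrp h\<^esub> z = x \<otimes>\<^bsub>Ggrp h\<^esub> (y \<otimes>\<^bsub>Ggrp h\<^esub> z)"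
    by (cases x; cases y; cases z)
      (auto simp: mem_Ggrp_iff Ggrp_mult Gmult_Pair dmult_assoc phiD_dmult phiD_phiD snd_dmult mod_simps)
next
  fix x
  assume "x \<in> carrier (Ggrp h)"
  then show "\<one>\<^bsub>Ggrp h\<^esub> \<otimes>\<^bsub>Ggrp h\<^esub> x = x"
    by (cases x) (auto simp: mem_Ggrp_iff Ggrp_mult Ggrp_one Gmult_Pair dmult_def)
next
  fix x
  assume x: "x \<in> carrier (Ggrp h)"
  obtain a s e where x_eq: "x = ((a, s), e)"
    by (metis prod.collapse)
  obtain b where b: "(if e = 0 then (a, s) else phiD h (a, s)) = (b, s)" "0 \<le> b" "b < 4*h"
    using x assms by (auto simp: x_eq mem_Ggrp_iff phiD_def)
  define y where "y = ((if s = 0 then (- b) mod (4*h) else b, s), e)"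
  have "y \<in> carrier (Ggrp h)"
    using x b assms by (auto simp: y_def x_eq mem_Ggrp_iff)
  moreover have "y \<otimes>\<^bsub>Ggrp h\<^esub> x = \<one>\<^bsub>Ggrp h\<^esub>"
    using x unfolding y_def x_eq Ggrp_mult Ggrp_one Gmult_Pair b(1)
    by (auto simp: mem_Ggrp_iff dmult_def mod_simps)
  ultimately show "\<exists>y\<in>carrier (Ggrp h). y \<otimes>\<^bsub>Ggrp h\<^esub> x = \<one>\<^bsub>Ggrp h\<^esub>"
    by blast
qed

definition Z2_kernel :: "('a, 'b) monoid_scheme \<Rightarrow> ('a \<Rightarrow> bool) \<Rightarrow> bool" where
  "Z2_kernel G P \<longleftrightarrow> (\<forall>x \<in> carrier G. \<forall>y \<in> carrier G. P (x \<otimes>\<^bsub>G\<^esub> y) \<longleftrightarrow> (P x \<longleftrightarrow> P y))"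

lemma Z2_kernelD:
  "Z2_kernel G P \<Longrightarrow> x \<in> carrier G \<Longrightarrow> y \<in> carrier G \<Longrightarrow> P (x \<otimes>\<^bsub>G\<^esub> y) \<longleftrightarrow> (P x \<longleftrightarrow> P y)"
  by (simp add: Z2_kernel_def)

context group
begin

lemma Z2_kernel_one:
  assumes "Z2_kernel G P"
  shows "P \<one>"
  using assms one_closed unfolding Z2_kernel_def by force

lemma Z2_kernel_foldr:
  assumes "Z2_kernel G P" "set gs \<subseteq> carrier G"
  shows "P (foldr (\<otimes>) gs \<one>) \<longleftrightarrow> even (length (filter (\<lambda>g. \<not> P g) gs))"
  using assms(2)
proof (induction gs)
  case Nil
  then show ?case using Z2_kernel_one[OF assms(1)] by simp
next
  case (Cons g gs)
  have "foldr (\<otimes>) gs \<one> \<in> carrier G"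
    using Cons.prems by auto
  then show ?case
    using Cons assms(1) unfolding Z2_kernel_def by auto
qed

lemma Z2_kernel_subgroup:
  assumes "Z2_kernel G P"
  shows "subgroup {x \<in> carrier G. P x} G"
proof (rule subgroupI)
  show "{x \<in> carrier G. P x} \<noteq> {}"
    using Z2_kernel_one[OF assms] by blast
next
  fix x
  assume "x \<in> {x \<in> carrier G. P x}"
  then have x: "x \<in> carrier G" "P x"
    by auto
  then have "P \<one> \<longleftrightarrow> (P x \<longleftrightarrow> P (inv x))"
    using Z2_kernelD[OF assms x(1) inv_closed[OF x(1)]] by (simp add: r_inv)
  then show "inv x \<in> {x \<in> carrier G. P x}"
    using x Z2_kernel_one[OF assms] by (simp add: r_inv)
next
  fix x y
  assume "x \<in> {x \<in> carrier G. P x}" "y \<in> {x \<in> carrier G. P x}"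
  then show "x \<otimes> y \<in> {x \<in> carrier G. P x}"
    using Z2_kernelD[OF assms] by auto
qed auto

lemma generate_subset_Z2_kernel:
  assumes P: "Z2_kernel G P" and gs: "set gs \<subseteq> carrier G" "foldr (\<otimes>) gs \<one> = \<one>"
    and j: "j < length gs" and others: "\<forall>i < length gs. i \<noteq> j \<longrightarrow> P (gs ! i)"
  shows "generate G (set gs) \<subseteq> {x \<in> carrier G. P x}"
proof -
  have "even (length (filter (\<lambda>g. \<not> P g) gs))"
    using Z2_kernel_foldr[OF P gs(1)] Z2_kernel_one[OF P] gs(2) by simp
  then have "card {i. i < length gs \<and> \<not> P (gs ! i)} \<noteq> card {j}"
    unfolding length_filter_conv_card by auto
  then have "{i. i < length gs \<and> \<not> P (gs ! i)} \<noteq> {j}"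
    by metis
  moreover have "{i. i < length gs \<and> \<not> P (gs ! i)} \<subseteq> {j}"
    using others by auto
  ultimately have "{i. i < length gs \<and> \<not> P (gs ! i)} = {}"
    by blast
  then have "set gs \<subseteq> {x \<in> carrier G. P x}"
    using gs(1) by (auto simp: in_set_conv_nth)
  then show ?thesis
    using generate_subgroup_incl Z2_kernel_subgroup[OF P] by blast
qed

end

lemma even_mod_4h_iff: "even ((x::int) mod (4*h)) \<longleftrightarrow> even x"
  by (rule dvd_mod_iff) simp

text \<open>xy_parity u v g says that g lies in the kernel of x^a y^s \<beta>^e \<mapsto> u a + v s mod 2,
  a homomorphism onto Z/2 because n is even and \<beta>_2 preserves the parities of a and s.\<close>
definition xy_parity :: "int \<Rightarrow> int \<Rightarrow> (int \<times> int) \<times> int \<Rightarrow> bool" where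
  "xy_parity u v g \<longleftrightarrow> even (u * fst (fst g) + v * snd (fst g))"

lemma even_lin_comb_iff:
  fixes A S a s b t u v :: int
  assumes "even A \<longleftrightarrow> (even a \<longleftrightarrow> even b)" "even S \<longleftrightarrow> (even s \<longleftrightarrow> even t)"
  shows "even (u * A + v * S) \<longleftrightarrow> (even (u * a + v * s) \<longleftrightarrow> even (u * b + v * t))"
  using assms by (auto simp: even_mult_iff)

lemma Z2_kernel_xy_parity: "Z2_kernel (Ggrp h) (xy_parity u v)"
  unfolding Z2_kernel_def
proof (intro ballI)
  fix x y :: "(int \<times> int) \<times> int"
  obtain a s e b t f where xy: "x = ((a, s), e)" "y = ((b, t), f)"
    by (metis prod.collapse)
  have "even (fst (fst (Gmult h x y))) \<longleftrightarrow> (even a \<longleftrightarrow> even b)"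
    by (auto simp: xy Gmult_Pair dmult_def phiD_def even_mod_4h_iff)
  moreover have "even (snd (fst (Gmult h x y))) \<longleftrightarrow> (even s \<longleftrightarrow> even t)"
    by (auto simp: xy Gmult_Pair dmult_def phiD_def)
  ultimately show "xy_parity u v (x \<otimes>\<^bsub>Ggrp h\<^esub> y) \<longleftrightarrow> (xy_parity u v x \<longleftrightarrow> xy_parity u v y)"
    unfolding xy_parity_def Ggrp_mult xy fst_conv snd_conv by (rule even_lin_comb_iff)
qed


lemma xy_parity_proper:
  assumes "h > 0" "odd u \<or> odd v"
  shows "\<exists>g \<in> carrier (Ggrp h). \<not> xy_parity u v g"
proof (cases "odd u")
  case True
  show ?thesis
  proof
    show "((1, 0), 0) \<in> carrier (Ggrp h)"
      using assms(1) by (simp add: mem_Ggrp_iff)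
    show "\<not> xy_parity u v ((1, 0), 0)"
      using True by (simp add: xy_parity_def)
  qed
next
  case False
  show ?thesis
  proof
    show "((0, 1), 0) \<in> carrier (Ggrp h)"
      using assms(1) by (simp add: mem_Ggrp_iff)
    show "\<not> xy_parity u v ((0, 1), 0)"
      using False assms(2) by (simp add: xy_parity_def)
  qed
qed

lemma ex_xy_parity: "\<exists>u v. (odd u \<or> odd v) \<and> xy_parity u v g"
proof -
  have "xy_parity 1 0 g \<or> xy_parity 0 1 g \<or> xy_parity 1 1 g"
    by (auto simp: xy_parity_def)
  then show ?thesis
    by (metis odd_one)
qed

text \<open>Since h is odd, 4 divides 2h - 2, so the square x^(2 - (2h-2)a) of y x^a \<beta>_2 is
  never trivial; the square x^(2ha) of x^a \<beta>_2 is trivial iff a is even.\<close>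
lemma involution_outside_Hsub:
  assumes "h > 0" "odd h" "g \<in> carrier (Ggrp h)" "g \<notin> Hsub h"
    and "g \<otimes>\<^bsub>Ggrp h\<^esub> g = \<one>\<^bsub>Ggrp h\<^esub>"
  shows "snd (fst g) = 0 \<and> even (fst (fst g))"
proof -
  obtain a s where g: "g = ((a, s), 1)" and s: "s \<in> {0, 1}"
    using assms(3,4) by (cases g) (auto simp: Hsub_def mem_Ggrp_iff)
  have square: "Gmult h g g = ((0, 0), 0)"
    using assms(5) by (simp add: Ggrp_mult Ggrp_one)
  show ?thesis
  proof (cases "s = 0")
    case True
    then have "(a + ((2*h - 1) * a) mod (4*h)) mod (4*h) = 0"
      using square by (simp add: g Gmult_Pair dmult_def phiD_def)
    then have "4*h dvd a + (2*h - 1) * a"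
      by (simp add: mod_add_right_eq dvd_eq_mod_eq_0)
    then have "(2*h) * 2 dvd (2*h) * a"
      by (simp add: algebra_simps)
    then have "even a"
      using assms(1) by (subst (asm) dvd_times_left_cancel_iff) auto
    then show ?thesis
      using True by (simp add: g)
  next
    case False
    then have "(a - ((2*h - 1) * a - 2) mod (4*h)) mod (4*h) = 0"
      using square s by (simp add: g Gmult_Pair dmult_def phiD_def)
    then have "4*h dvd a - ((2*h - 1) * a - 2)"
      by (simp add: mod_diff_right_eq dvd_eq_mod_eq_0)
    moreover obtain j where "h = 2*j + 1"
      using assms(2) by (rule oddE)
    then have "a - ((2*h - 1) * a - 2) = 2 - 4 * (j * a)"
      by (simp add: algebra_simps)
    ultimately have "4 * h dvd 2 - 4 * (j * a)"
      by simp
    then have "4 dvd 2 - 4 * (j * a)"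
      by (rule dvd_mult_left)
    then have "(4::int) dvd 2"
      by (metis dvd_add_left_iff dvd_triv_left diff_add_cancel)
    then show ?thesis
      by simp
  qed
qed

lemma xy_parity_involution_outside_Hsub:
  assumes "h > 0" "odd h" "g \<in> carrier (Ggrp h)" "g \<notin> Hsub h"
    and "g [^]\<^bsub>Ggrp h\<^esub> (2::nat) = \<one>\<^bsub>Ggrp h\<^esub>"
  shows "xy_parity u v g"
proof -
  interpret group "Ggrp h"
    using assms(1) by (rule group_Ggrp)
  have "g \<otimes>\<^bsub>Ggrp h\<^esub> g = \<one>\<^bsub>Ggrp h\<^esub>"
    using assms(3,5) by (simp add: numeral_2_eq_2)
  then show ?thesis
    using involution_outside_Hsub[OF assms(1-4)] by (simp add: xy_parity_def)
qed

lemma not_admissible_if_xy_parity_all_but_one: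
  assumes "h > 0" "admissible_hom (Ggrp h) ms gs" "odd u \<or> odd v" "j < length gs"
    and "\<forall>i < length gs. i \<noteq> j \<longrightarrow> xy_parity u v (gs ! i)"
  shows False
proof -
  interpret group "Ggrp h"
    using assms(1) by (rule group_Ggrp)
  have gs: "set gs \<subseteq> carrier (Ggrp h)" "foldr (\<otimes>\<^bsub>Ggrp h\<^esub>) gs \<one>\<^bsub>Ggrp h\<^esub> = \<one>\<^bsub>Ggrp h\<^esub>"
    and generates: "generate (Ggrp h) (set gs) = carrier (Ggrp h)"
    using assms(2) by (auto simp: admissible_hom_def T_hom_def)
  have "generate (Ggrp h) (set gs) \<subseteq> {g \<in> carrier (Ggrp h). xy_parity u v g}"
    using Z2_kernel_xy_parity gs assms(4,5) by (rule generate_subset_Z2_kernel)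
  then show False
    using xy_parity_proper[OF assms(1,3)] generates by blast
qed

lemma length_admissible_hom: "admissible_hom G ms gs \<Longrightarrow> length gs = length ms"
  by (simp add: admissible_hom_def T_hom_def)

lemma admissible_hom_nth:
  "admissible_hom G ms gs \<Longrightarrow> i < length gs \<Longrightarrow>
    gs ! i \<in> carrier G \<and> gs ! i [^]\<^bsub>G\<^esub> ms ! i = \<one>\<^bsub>G\<^esub>"
  by (auto simp: admissible_hom_def T_hom_def)

lemma not_admissible_if_involutions_outside_Hsub_all_but_one:
  assumes "h > 0" "odd h" "admissible_hom (Ggrp h) ms gs" "j < length gs"
    and "\<forall>i < length gs. i \<noteq> j \<longrightarrow> ms ! i = 2 \<and> gs ! i \<notin> Hsub h"
  shows False
proof (rule not_admissible_if_xy_parity_all_but_one[OF assms(1,3) _ assms(4)])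
  show "\<forall>i < length gs. i \<noteq> j \<longrightarrow> xy_parity 1 0 (gs ! i)"
  proof (intro allI impI)
    fix i
    assume i: "i < length gs" "i \<noteq> j"
    then show "xy_parity 1 0 (gs ! i)"
      using assms(5) admissible_hom_nth[OF assms(3) i(1)]
        xy_parity_involution_outside_Hsub[OF assms(1,2)] by simp
  qed
qed simp

lemma not_cover_I:
  assumes "h > 0" "odd h"
  shows "\<not> cover_I (Ggrp h) (Hsub h) gs"
proof
  assume "cover_I (Ggrp h) (Hsub h) gs"
  then have "admissible_hom (Ggrp h) (replicate 6 2) gs" "\<forall>i < 6. gs ! i \<notin> Hsub h"
    by (auto simp: cover_I_def)
  moreover from this have "length gs = 6"
    by (simp add: length_admissible_hom)
  ultimately show False
    by (intro not_admissible_if_involutions_outside_Hsub_all_but_one[OF assms, where j = 0]) auto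
qed

lemma not_cover_II:
  assumes "h > 0" "odd h"
  shows "\<not> cover_II (Ggrp h) (Hsub h) gs"
proof
  assume "cover_II (Ggrp h) (Hsub h) gs"
  then obtain c5 where "admissible_hom (Ggrp h) [2, 2, 2, 2, c5] gs" "\<forall>i < 4. gs ! i \<notin> Hsub h"
    by (auto simp: cover_II_def)
  moreover from this have "length gs = 5"
    by (simp add: length_admissible_hom)
  ultimately show False
    by (intro not_admissible_if_involutions_outside_Hsub_all_but_one[OF assms, where j = 4])
      (auto simp: less_Suc_eq numeral_eq_Suc)
qed

lemma not_cover_IIIa:
  assumes "h > 0" "odd h"
  shows "\<not> cover_IIIa (Ggrp h) (Hsub h) gs"
proof
  assume "cover_IIIa (Ggrp h) (Hsub h) gs"
  then obtain d4 where "admissible_hom (Ggrp h) [2, 2, 2, 2 * d4] gs" "\<forall>i < 4. gs ! i \<notin> Hsub h"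
    by (auto simp: cover_IIIa_def)
  moreover from this have "length gs = 4"
    by (simp add: length_admissible_hom)
  ultimately show False
    by (intro not_admissible_if_involutions_outside_Hsub_all_but_one[OF assms, where j = 3])
      (auto simp: less_Suc_eq numeral_eq_Suc)
qed

lemma not_cover_IIIb:
  assumes "h > 0" "odd h"
  shows "\<not> cover_IIIb (Ggrp h) (Hsub h) gs"
proof
  assume "cover_IIIb (Ggrp h) (Hsub h) gs"
  then obtain c3 c4 where adm: "admissible_hom (Ggrp h) [2, 2, c3, c4] gs"
    and outside: "gs ! 0 \<notin> Hsub h" "gs ! 1 \<notin> Hsub h"
    by (auto simp: cover_IIIb_def)
  then have "length gs = 4"
    by (simp add: length_admissible_hom)
  then have "gs ! 0 \<in> carrier (Ggrp h) \<and> gs ! 0 [^]\<^bsub>Ggrp h\<^esub> (2::nat) = \<one>\<^bsub>Ggrp h\<^esub>"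
    "gs ! 1 \<in> carrier (Ggrp h) \<and> gs ! 1 [^]\<^bsub>Ggrp h\<^esub> (2::nat) = \<one>\<^bsub>Ggrp h\<^esub>"
    using admissible_hom_nth[OF adm, of 0] admissible_hom_nth[OF adm, of 1] by (simp_all add: nth_Cons')
  moreover obtain u v where uv: "odd u \<or> odd v" "xy_parity u v (gs ! 2)"
    using ex_xy_parity by blast
  ultimately show False
    using not_admissible_if_xy_parity_all_but_one[OF assms(1) adm uv(1), where j = 3]
      xy_parity_involution_outside_Hsub[OF assms] outside \<open>length gs = 4\<close>
    by (auto simp: less_Suc_eq numeral_eq_Suc)
qed

theorem lemma5p8:
  fixes h :: int
  assumes "h > 0" and "odd h"
  shows "\<not> (\<exists>gs. cover_I (Ggrp h) (Hsub h) gs \<or> cover_II (Ggrp h) (Hsub h) gs \<or>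
                 cover_IIIa (Ggrp h) (Hsub h) gs \<or> cover_IIIb (Ggrp h) (Hsub h) gs)"
  using not_cover_I not_cover_II not_cover_IIIa not_cover_IIIb assms by blast

end
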